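(* For every $A\in\mathcal A$ there exists $p\in\mathcal K$ such that $$\mathcal I_0(p):=\int_0^T\Big(1-\sqrt{1-|\dot p(t)|^2}\Big)dt+\int_0^T\dot p(t)\cdot A(t,p(t))\,dt<0.$$
   Context: $T>0$ fixed. $\mathcal A$ is the set of $A\in\mathcal C^1(\mathbb R^4;\mathbb R^3)$, $A=A(t,x)$, $T$-periodic in $t$, with $\partial_tA\not\equiv0$ and $\lim_{|x|\to\infty}(|\partial_tA(t,x)|+|\nabla A(t,x)|)=0$ uniformly in $t$ ($\nabla A$ = spatial Jacobian). $\mathcal W$ = Lipschitz $T$-periodic $q:\mathbb R\to\mathbb R^3$; $\mathcal K=\{q\in\mathcal W:\|\dot q\|_\infty\le1\}$. *)

theory Defs
  imports "HOL-Analysis.Analysis"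
begin

definition C1_fun :: "(real \<times> (real^3) \<Rightarrow> real^3) \<Rightarrow> bool" where
  "C1_fun A \<longleftrightarrow> (\<exists>A'. (\<forall>z. (A has_derivative blinfun_apply (A' z)) (at z)) \<and> continuous_on UNIV A')"

definition dt :: "(real \<times> (real^3) \<Rightarrow> real^3) \<Rightarrow> real \<Rightarrow> real^3 \<Rightarrow> real^3" where
  "dt A t x = frechet_derivative A (at (t, x)) (1, 0)"

definition grad_x :: "(real \<times> (real^3) \<Rightarrow> real^3) \<Rightarrow> real \<Rightarrow> real^3 \<Rightarrow> (real^3 \<Rightarrow> real^3)" where
  "grad_x A t x = (\<lambda>v. frechet_derivative A (at (t, x)) (0, v))"

definition class_A :: "real \<Rightarrow> (real \<times> (real^3) \<Rightarrow> real^3) set" where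
  "class_A T = {A. C1_fun A
      \<and> (\<forall>t x. A (t + T, x) = A (t, x))
      \<and> (\<exists>t x. dt A t x \<noteq> 0)
      \<and> (\<forall>e>0. \<exists>R. \<forall>t x. norm x \<ge> R \<longrightarrow> norm (dt A t x) + onorm (grad_x A t x) < e)}"

definition class_W :: "real \<Rightarrow> (real \<Rightarrow> real^3) set" where
  "class_W T = {q. (\<exists>L. L-lipschitz_on UNIV q) \<and> (\<forall>t. q (t + T) = q t)}"

definition class_K :: "real \<Rightarrow> (real \<Rightarrow> real^3) set" where
  "class_K T = {q \<in> class_W T. AE t in lborel. norm (vector_derivative q (at t)) \<le> 1}"

definition I0 :: "real \<Rightarrow> (real \<times> (real^3) \<Rightarrow> real^3) \<Rightarrow> (real \<Rightarrow> real^3) \<Rightarrow> real" where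
  "I0 T A p =
     (LINT t:{0..T}|lborel. 1 - sqrt (1 - (norm (vector_derivative p (at t)))\<^sup>2))
   + (LINT t:{0..T}|lborel. vector_derivative p (at t) \<bullet> A (t, p t))"

end

theory Submission
  imports Defs "HOL-Library.Periodic_Fun"
begin

(* Since dt A does not vanish identically, some slice a(t) = A(t, x0) is a nonconstant
   T-periodic function. Let g be a minus its mean over a period and w a primitive of g;
   w is T-periodic because g has mean zero. For p = x0 - \<epsilon> w the kinetic part of I0
   is at most \<epsilon>\<^sup>2 \<integral> |g|\<^sup>2, while the magnetic part is
   -\<epsilon> \<integral> g \<bullet> A(t, p t) = -\<epsilon> \<integral> |g|\<^sup>2 + o(\<epsilon>),
   because \<integral> g \<bullet> a = \<integral> |g|\<^sup>2 and A(t, p t) tends to a(t) uniformly as \<epsilon> \<rightarrow> 0.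
   Hence I0 p < 0 for small \<epsilon>. *)

lemma periodic_value_in_period:
  fixes f :: "real \<Rightarrow> 'a"
  assumes "\<And>t. f (t + T) = f t" and "T > 0"
  obtains s where "s \<in> {0..T}" and "f t = f s"
proof -
  interpret periodic_fun_simple f T
    using assms(1) by unfold_locales
  define n where "n = \<lfloor>t / T\<rfloor>"
  have "of_int n * T \<le> t" and "t < (of_int n + 1) * T"
    unfolding n_def using assms(2) by (rule floor_divide_lower, rule floor_divide_upper)
  then have "t - of_int n * T \<in> {0..T}"
    by (simp add: algebra_simps)
  moreover have "f (t - of_int n * T) = f t"
    by (rule minus_of_int)
  ultimately show ?thesis
    using that by metis
qed

lemma periodic_continuous_bounded:
  fixes f :: "real \<Rightarrow> 'a::real_normed_vector"
  assumes "continuous_on UNIV f" and "\<And>t. f (t + T) = f t" and "T > 0"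
  obtains B where "B > 0" and "\<And>t. norm (f t) \<le> B"
proof -
  have "bounded (f ` {0..T})"
    by (intro compact_imp_bounded compact_continuous_image continuous_on_subset[OF assms(1)]) auto
  then obtain B where "B > 0" and B: "\<And>y. y \<in> f ` {0..T} \<Longrightarrow> norm y \<le> B"
    unfolding bounded_pos by blast
  moreover have "norm (f t) \<le> B" for t
  proof -
    obtain s where "s \<in> {0..T}" and "f t = f s"
      by (rule periodic_value_in_period[of f T, OF assms(2,3)])
    then show ?thesis
      using B by simp
  qed
  ultimately show ?thesis
    using that by blast
qed

lemma periodic_if_derivative_periodic:
  fixes w :: "real \<Rightarrow> 'a::real_normed_vector"
  assumes "\<And>t. (w has_vector_derivative g t) (at t)" and "\<And>t. g (t + T) = g t"
    and "w T = w 0"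
  shows "w (t + T) = w t"
proof -
  have "((\<lambda>t. w (t + T) - w t) has_derivative (\<lambda>h. 0)) (at t within UNIV)" for t
  proof -
    have "((\<lambda>t. t + T) has_vector_derivative 1) (at t)"
      by (auto intro!: derivative_eq_intros)
    from vector_diff_chain_at[OF this assms(1)]
    have "((\<lambda>t. w (t + T)) has_vector_derivative g (t + T)) (at t)"
      by (simp add: o_def)
    then have "((\<lambda>t. w (t + T) - w t) has_vector_derivative (g (t + T) - g t)) (at t)"
      using assms(1) by (rule has_vector_derivative_diff)
    then show ?thesis
      using assms(2) by (simp add: has_vector_derivative_def)
  qed
  from has_derivative_zero_constant[OF convex_UNIV this]
  obtain c where c: "\<And>t. w (t + T) - w t = c"
    by blast
  have "c = 0"
    using c[of 0] assms(3) by simp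
  then show ?thesis
    using c[of t] by simp
qed

(* The annotation (0::real) makes the lower bound ereal 0, as in interval_integral_FTC2;
   a bare 0 would be the ereal zero and the rule would not apply. *)
lemma interval_integral_has_vector_derivative:
  fixes g :: "real \<Rightarrow> 'a::euclidean_space"
  assumes "continuous_on UNIV g"
  shows "((\<lambda>t. LBINT s=(0::real)..t. g s) has_vector_derivative g t) (at t)"
proof -
  have "((\<lambda>t. LBINT s=(0::real)..t. g s) has_vector_derivative g t) (at t within {-\<bar>t\<bar>-1..\<bar>t\<bar>+1})"
    by (rule interval_integral_FTC2) (auto intro: continuous_on_subset[OF assms])
  moreover have "at t within {-\<bar>t\<bar>-1..\<bar>t\<bar>+1} = at t"
    by (rule at_within_Icc_at) auto
  ultimately show ?thesis
    by simp
qed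

lemma periodic_primitive:
  fixes g :: "real \<Rightarrow> 'a::euclidean_space"
  assumes "continuous_on UNIV g" and "\<And>t. g (t + T) = g t" and "T \<ge> 0"
    and "integral {0..T} g = 0"
  shows "(LBINT s=(0::real)..t + T. g s) = (LBINT s=(0::real)..t. g s)"
proof -
  define w where "w t = (LBINT s=(0::real)..t. g s)" for t :: real
  have "w T = integral {0..T} g"
    unfolding w_def using assms(3) continuous_on_subset[OF assms(1)]
    by (intro interval_integral_eq_integral borel_integrable_atLeastAtMost') auto
  moreover have "w 0 = 0"
    unfolding w_def by simp
  ultimately have "w T = w 0"
    using assms(4) by simp
  with interval_integral_has_vector_derivative[OF assms(1)] assms(2)
  show ?thesis
    unfolding w_def by (rule periodic_if_derivative_periodic)
qed

definition mean_deviation :: "real \<Rightarrow> (real \<Rightarrow> 'a::euclidean_space) \<Rightarrow> real \<Rightarrow> 'a" where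
  "mean_deviation T a t = a t - (1 / T) *\<^sub>R integral {0..T} a"

lemma continuous_on_mean_deviation:
  "continuous_on S a \<Longrightarrow> continuous_on S (mean_deviation T a)"
  unfolding mean_deviation_def by (intro continuous_intros)

lemma mean_deviation_periodic:
  "(\<And>t. a (t + T) = a t) \<Longrightarrow> mean_deviation T a (t + T) = mean_deviation T a t"
  unfolding mean_deviation_def by simp

lemma integral_mean_deviation:
  assumes "a integrable_on {0..T}" and "T > 0"
  shows "integral {0..T} (mean_deviation T a) = 0"
proof -
  have "integral {0..T} (mean_deviation T a)
      = integral {0..T} a - integral {0..T} (\<lambda>t. (1 / T) *\<^sub>R integral {0..T} a)"
    unfolding mean_deviation_def using assms(1) by (intro integral_diff integrable_const_ivl)
  then show ?thesis
    using assms(2) by simp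
qed

lemma integral_inner_mean_deviation:
  fixes a :: "real \<Rightarrow> 'a::euclidean_space"
  assumes "continuous_on {0..T} a" and "T > 0"
  shows "integral {0..T} (\<lambda>t. mean_deviation T a t \<bullet> a t)
       = integral {0..T} (\<lambda>t. (norm (mean_deviation T a t))\<^sup>2)"
proof -
  let ?g = "mean_deviation T a" and ?m = "(1 / T) *\<^sub>R integral {0..T} a"
  have cont_g: "continuous_on {0..T} ?g"
    using assms(1) by (rule continuous_on_mean_deviation)
  have "integral {0..T} (\<lambda>t. ?g t \<bullet> ?m) = integral {0..T} ?g \<bullet> ?m"
    using integral_linear[OF integrable_continuous_real[OF cont_g] bounded_linear_inner_left]
    by (simp add: o_def)
  also have "\<dots> = 0"
    using integral_mean_deviation[OF integrable_continuous_real[OF assms(1)] assms(2)] by simp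
  finally have "integral {0..T} (\<lambda>t. ?g t \<bullet> ?m) = 0" .
  moreover have "?g t \<bullet> a t = (norm (?g t))\<^sup>2 + ?g t \<bullet> ?m" for t
    by (simp add: mean_deviation_def power2_norm_eq_inner algebra_simps)
  moreover have "(\<lambda>t. (norm (?g t))\<^sup>2) integrable_on {0..T}" "(\<lambda>t. ?g t \<bullet> ?m) integrable_on {0..T}"
    by (intro integrable_continuous_real continuous_intros cont_g)+
  ultimately show ?thesis
    by (simp add: integral_add)
qed

lemma integral_norm_mean_deviation_pos:
  fixes a :: "real \<Rightarrow> 'a::euclidean_space"
  assumes "continuous_on {0..T} a" and "T > 0" and "t1 \<in> {0..T}" and "a t1 \<noteq> a 0"
  shows "integral {0..T} (\<lambda>t. (norm (mean_deviation T a t))\<^sup>2) > 0"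
proof -
  have cont: "continuous_on {0..T} (\<lambda>t. (norm (mean_deviation T a t))\<^sup>2)"
    by (intro continuous_intros continuous_on_mean_deviation assms(1))
  have "mean_deviation T a t1 \<noteq> mean_deviation T a 0"
    using assms(4) by (simp add: mean_deviation_def)
  then have "\<exists>t\<in>{0..T}. (norm (mean_deviation T a t))\<^sup>2 \<noteq> 0"
    using assms(2,3) by (metis atLeastAtMost_iff less_eq_real_def norm_eq_zero power_eq_0_iff)
  then have "integral {0..T} (\<lambda>t. (norm (mean_deviation T a t))\<^sup>2) \<noteq> 0"
    using integral_eq_0_iff[OF cont assms(2)] by simp
  moreover have "integral {0..T} (\<lambda>t. (norm (mean_deviation T a t))\<^sup>2) \<ge> 0"
    by (intro integral_nonneg integrable_continuous_real cont) simp
  ultimately show ?thesis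
    by linarith
qed

lemma one_minus_sqrt_one_minus_le:
  fixes y :: real
  assumes "0 \<le> y" and "y \<le> 1"
  shows "1 - sqrt (1 - y) \<le> y"
proof -
  have "(1 - y)\<^sup>2 \<le> 1 - y"
    using assms by (simp add: power2_eq_square mult_left_le)
  then show ?thesis
    using real_le_rsqrt by fastforce
qed

lemma class_KI:
  assumes "\<And>t. (p has_vector_derivative v t) (at t)" and "\<And>t. norm (v t) \<le> 1"
    and "\<And>t. p (t + T) = p t"
  shows "p \<in> class_K T"
proof -
  have "1-lipschitz_on UNIV p"
  proof (rule bounded_derivative_imp_lipschitz)
    show "(p has_derivative (\<lambda>h. h *\<^sub>R v t)) (at t within UNIV)" for t
      using assms(1) by (simp add: has_vector_derivative_def)
    show "onorm (\<lambda>h. h *\<^sub>R v t) \<le> 1" for t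
      using assms(2) by (simp add: onorm_scaleR_left onorm_id bounded_linear_ident)
  qed auto
  moreover have "vector_derivative p (at t) = v t" for t
    using assms(1) by (rule vector_derivative_at)
  ultimately show ?thesis
    unfolding class_K_def class_W_def using assms(2,3) by auto
qed

lemma I0_le_integral:
  assumes "\<And>t. (p has_vector_derivative v t) (at t)" and "continuous_on UNIV v"
    and "continuous_on UNIV A" and "\<And>t. norm (v t) \<le> 1"
  shows "I0 T A p \<le> integral {0..T} (\<lambda>t. (norm (v t))\<^sup>2) + integral {0..T} (\<lambda>t. v t \<bullet> A (t, p t))"
proof -
  have vdp: "vector_derivative p (at t) = v t" for t
    using assms(1) by (rule vector_derivative_at)
  have cont_p: "continuous_on UNIV p"
    using assms(1) has_vector_derivative_continuous continuous_at_imp_continuous_on by blast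
  have cont_kin: "continuous_on {0..T} (\<lambda>t. 1 - sqrt (1 - (norm (v t))\<^sup>2))"
    by (intro continuous_intros continuous_on_subset[OF assms(2)]) auto
  have cont_mag: "continuous_on {0..T} (\<lambda>t. v t \<bullet> A (t, p t))"
    by (intro continuous_intros continuous_on_compose2[OF assms(3)]
          continuous_on_subset[OF assms(2)] continuous_on_subset[OF cont_p]) auto
  have "I0 T A p = integral {0..T} (\<lambda>t. 1 - sqrt (1 - (norm (v t))\<^sup>2))
                   + integral {0..T} (\<lambda>t. v t \<bullet> A (t, p t))"
    unfolding I0_def vdp
    using set_borel_integral_eq_integral(2)[OF borel_integrable_atLeastAtMost'[OF cont_kin]]
      set_borel_integral_eq_integral(2)[OF borel_integrable_atLeastAtMost'[OF cont_mag]]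
    by simp
  also have "integral {0..T} (\<lambda>t. 1 - sqrt (1 - (norm (v t))\<^sup>2))
           \<le> integral {0..T} (\<lambda>t. (norm (v t))\<^sup>2)"
    using assms(4) cont_kin
    by (intro integral_le integrable_continuous_real one_minus_sqrt_one_minus_le
          continuous_intros continuous_on_subset[OF assms(2)])
      (auto simp: abs_square_le_1)
  finally show ?thesis
    by simp
qed

lemma has_vector_derivative_dt:
  assumes "(A has_derivative A') (at (t, x))"
  shows "((\<lambda>s. A (s, x)) has_vector_derivative dt A t x) (at t)"
proof -
  have "((\<lambda>s. (s, x)) has_derivative (\<lambda>h. (h, 0))) (at t)"
    by (auto intro!: derivative_eq_intros)
  from has_derivative_compose[OF this assms]
  have deriv: "((\<lambda>s. A (s, x)) has_derivative (\<lambda>h. A' (h, 0))) (at t)"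
    by (simp add: o_def)
  have "dt A t x = A' (1, 0)"
    unfolding dt_def using frechet_derivative_at[OF assms] by simp
  then have "A' (h, 0) = h *\<^sub>R dt A t x" for h
    using linear_cmul[OF has_derivative_linear[OF assms], of h "(1, 0)"] by simp
  with deriv show ?thesis
    by (simp add: has_vector_derivative_def)
qed

lemma class_A_continuous:
  assumes "A \<in> class_A T"
  shows "continuous_on UNIV A"
proof -
  obtain A' where "\<And>z. (A has_derivative blinfun_apply (A' z)) (at z)"
    using assms unfolding class_A_def C1_fun_def by blast
  then have "isCont A z" for z
    by (rule has_derivative_continuous)
  then show ?thesis
    by (simp add: continuous_at_imp_continuous_on)
qed

lemma class_A_nonconstant_slice:
  assumes "A \<in> class_A T" and "T > 0"
  obtains x0 t1 where "t1 \<in> {0..T}" and "A (t1, x0) \<noteq> A (0, x0)"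
proof -
  obtain A' where dA: "\<And>z. (A has_derivative blinfun_apply (A' z)) (at z)"
    using assms(1) unfolding class_A_def C1_fun_def by blast
  obtain t0 x0 where "dt A t0 x0 \<noteq> 0"
    using assms(1) unfolding class_A_def by blast
  moreover have "dt A t0 x0 = 0" if const: "\<And>t. t \<in> {0..T} \<Longrightarrow> A (t, x0) = A (0, x0)"
  proof -
    have per: "\<And>t. A (t + T, x0) = A (t, x0)"
      using assms(1) unfolding class_A_def by blast
    have "A (t, x0) = A (0, x0)" for t
    proof -
      obtain s where "s \<in> {0..T}" and "A (t, x0) = A (s, x0)"
        by (rule periodic_value_in_period[of "\<lambda>t. A (t, x0)", OF per assms(2)])
      then show ?thesis
        using const[of s] by simp
    qed
    then have "(\<lambda>s. A (s, x0)) = (\<lambda>_. A (0, x0))"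
      by (rule ext)
    from has_vector_derivative_dt[OF dA] has_vector_derivative_const[of "A (0, x0)" "at t0", folded this]
    show ?thesis
      by (rule vector_derivative_unique_at)
  qed
  ultimately show ?thesis
    using that by blast
qed

lemma uniformly_close_to_slice:
  fixes A :: "real \<times> 'a::euclidean_space \<Rightarrow> 'b::real_normed_vector"
  assumes "continuous_on UNIV A" and "\<eta> > 0"
  obtains \<delta> where "\<delta> > 0"
    and "\<And>t y. t \<in> {0..T} \<Longrightarrow> norm (y - x0) \<le> \<delta> \<Longrightarrow> norm (A (t, y) - A (t, x0)) < \<eta>"
proof -
  let ?K = "{0..T} \<times> cball x0 1"
  have "uniformly_continuous_on ?K A"
    by (intro compact_uniformly_continuous continuous_on_subset[OF assms(1)] compact_Times) auto
  then obtain d where "d > 0"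
    and d: "\<And>z z'. z \<in> ?K \<Longrightarrow> z' \<in> ?K \<Longrightarrow> dist z' z < d \<Longrightarrow> dist (A z') (A z) < \<eta>"
    using assms(2) unfolding uniformly_continuous_on_def by metis
  show ?thesis
  proof (rule that[of "min (d / 2) 1"])
    fix t y
    assume t: "t \<in> {0..T}" and y: "norm (y - x0) \<le> min (d / 2) 1"
    have "(t, x0) \<in> ?K" and "(t, y) \<in> ?K"
      using t y by (auto simp: dist_norm norm_minus_commute)
    moreover have "dist (t, y) (t, x0) < d"
      using y \<open>d > 0\<close> by (simp add: dist_Pair_Pair dist_norm)
    ultimately show "norm (A (t, y) - A (t, x0)) < \<eta>"
      using d by (force simp: dist_norm)
  qed (use \<open>d > 0\<close> in auto)
qed

lemma integral_inner_ge_of_close: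
  fixes g a b :: "real \<Rightarrow> 'a::euclidean_space"
  assumes "continuous_on {0..T} g" and "continuous_on {0..T} a" and "continuous_on {0..T} b"
    and "T \<ge> 0" and "\<And>t. t \<in> {0..T} \<Longrightarrow> norm (g t) \<le> G"
    and "\<And>t. t \<in> {0..T} \<Longrightarrow> norm (b t - a t) \<le> \<eta>"
  shows "integral {0..T} (\<lambda>t. g t \<bullet> a t) - G * \<eta> * T \<le> integral {0..T} (\<lambda>t. g t \<bullet> b t)"
proof -
  have "integral {0..T} (\<lambda>t. g t \<bullet> a t - G * \<eta>) \<le> integral {0..T} (\<lambda>t. g t \<bullet> b t)"
  proof (rule integral_le)
    fix t
    assume t: "t \<in> {0..T}"
    have "g t \<bullet> a t - g t \<bullet> b t \<le> norm (g t) * norm (b t - a t)"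
      using norm_cauchy_schwarz[of "g t" "a t - b t"]
      by (simp add: inner_diff_right norm_minus_commute)
    also have "\<dots> \<le> G * \<eta>"
      using assms(5,6)[OF t] order_trans[OF norm_ge_zero assms(5)[OF t]]
      by (intro mult_mono) auto
    finally show "g t \<bullet> a t - G * \<eta> \<le> g t \<bullet> b t"
      by simp
  qed (use assms(1-3) in \<open>auto intro!: integrable_continuous_real continuous_intros\<close>)
  moreover have "integral {0..T} (\<lambda>t. g t \<bullet> a t - G * \<eta>) = integral {0..T} (\<lambda>t. g t \<bullet> a t) - G * \<eta> * T"
    using assms(1,2,4) by (simp add: integral_diff integrable_continuous_real continuous_intros)
  ultimately show ?thesis
    by simp
qed

lemma I0_perturbation_le:
  fixes A :: "real \<times> (real^3) \<Rightarrow> real^3"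
  assumes "continuous_on UNIV A" and "continuous_on UNIV g" and "T \<ge> 0" and "\<epsilon> \<ge> 0"
    and "\<And>t. (w has_vector_derivative g t) (at t)" and "\<And>t. \<epsilon> * norm (g t) \<le> 1"
    and "\<And>t. t \<in> {0..T} \<Longrightarrow> norm (g t) \<le> G"
    and "\<And>t. t \<in> {0..T} \<Longrightarrow> norm (A (t, x0 - \<epsilon> *\<^sub>R w t) - A (t, x0)) \<le> \<eta>"
  shows "I0 T A (\<lambda>t. x0 - \<epsilon> *\<^sub>R w t)
      \<le> \<epsilon>\<^sup>2 * integral {0..T} (\<lambda>t. (norm (g t))\<^sup>2)
         - \<epsilon> * (integral {0..T} (\<lambda>t. g t \<bullet> A (t, x0)) - G * \<eta> * T)"
proof -
  let ?p = "\<lambda>t. x0 - \<epsilon> *\<^sub>R w t"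
  have dp: "(?p has_vector_derivative - \<epsilon> *\<^sub>R g t) (at t)" for t
    using assms(5) by (auto intro!: derivative_eq_intros)
  have cont_p: "continuous_on UNIV ?p"
    using dp has_vector_derivative_continuous continuous_at_imp_continuous_on by blast
  have slice: "continuous_on {0..T} (\<lambda>t. A (t, f t))" if "continuous_on UNIV f" for f
    by (intro continuous_on_compose2[OF assms(1)] continuous_intros continuous_on_subset[OF that]) auto
  have "I0 T A ?p \<le> integral {0..T} (\<lambda>t. (norm (- \<epsilon> *\<^sub>R g t))\<^sup>2)
                     + integral {0..T} (\<lambda>t. (- \<epsilon> *\<^sub>R g t) \<bullet> A (t, ?p t))"
    using assms(4,6) by (intro I0_le_integral dp continuous_intros assms(1,2)) simp
  also have "\<dots> = \<epsilon>\<^sup>2 * integral {0..T} (\<lambda>t. (norm (g t))\<^sup>2)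
                  - \<epsilon> * integral {0..T} (\<lambda>t. g t \<bullet> A (t, ?p t))"
    using assms(4) by (simp add: power_mult_distrib)
  also have "\<dots> \<le> \<epsilon>\<^sup>2 * integral {0..T} (\<lambda>t. (norm (g t))\<^sup>2)
                  - \<epsilon> * (integral {0..T} (\<lambda>t. g t \<bullet> A (t, x0)) - G * \<eta> * T)"
    using assms(3,4,7,8) slice[OF cont_p] slice[OF continuous_on_const] continuous_on_subset[OF assms(2)]
    by (intro diff_left_mono mult_left_mono integral_inner_ge_of_close) auto
  finally show ?thesis .
qed

lemma periodic_loop_aligned_with_nonconstant:
  fixes a :: "real \<Rightarrow> 'a::euclidean_space"
  assumes "continuous_on UNIV a" and "\<And>t. a (t + T) = a t" and "T > 0"
    and "t1 \<in> {0..T}" and "a t1 \<noteq> a 0"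
  obtains g w where "continuous_on UNIV g" and "\<And>t. g (t + T) = g t"
    and "\<And>t. (w has_vector_derivative g t) (at t)" and "\<And>t. w (t + T) = w t"
    and "integral {0..T} (\<lambda>t. g t \<bullet> a t) = integral {0..T} (\<lambda>t. (norm (g t))\<^sup>2)"
    and "integral {0..T} (\<lambda>t. (norm (g t))\<^sup>2) > 0"
proof
  let ?g = "mean_deviation T a"
  have cont_a: "continuous_on {0..T} a"
    using assms(1) by (rule continuous_on_subset) simp
  show cont_g: "continuous_on UNIV ?g"
    using assms(1) by (rule continuous_on_mean_deviation)
  show per_g: "?g (t + T) = ?g t" for t
    using assms(2) by (rule mean_deviation_periodic)
  show "((\<lambda>t. LBINT s=(0::real)..t. ?g s) has_vector_derivative ?g t) (at t)" for t
    using cont_g by (rule interval_integral_has_vector_derivative)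
  have "integral {0..T} ?g = 0"
    using integrable_continuous_real[OF cont_a] assms(3) by (rule integral_mean_deviation)
  then show "(LBINT s=(0::real)..t + T. ?g s) = (LBINT s=(0::real)..t. ?g s)" for t
    using cont_g per_g assms(3) by (intro periodic_primitive) auto
  show "integral {0..T} (\<lambda>t. ?g t \<bullet> a t) = integral {0..T} (\<lambda>t. (norm (?g t))\<^sup>2)"
    using cont_a assms(3) by (rule integral_inner_mean_deviation)
  show "integral {0..T} (\<lambda>t. (norm (?g t))\<^sup>2) > 0"
    using cont_a assms(3-5) by (rule integral_norm_mean_deviation_pos)
qed

lemma exists_negative_I0_of_aligned_loop:
  fixes A :: "real \<times> (real^3) \<Rightarrow> real^3"
  assumes "T > 0" and "continuous_on UNIV A"
    and "continuous_on UNIV g" and "\<And>t. g (t + T) = g t"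
    and dw: "\<And>t. (w has_vector_derivative g t) (at t)" and per_w: "\<And>t. w (t + T) = w t"
    and aligned: "integral {0..T} (\<lambda>t. g t \<bullet> A (t, x0)) = integral {0..T} (\<lambda>t. (norm (g t))\<^sup>2)"
    and "integral {0..T} (\<lambda>t. (norm (g t))\<^sup>2) > 0"
  shows "\<exists>p \<in> class_K T. I0 T A p < 0"
proof -
  define S where "S = integral {0..T} (\<lambda>t. (norm (g t))\<^sup>2)"
  have "S > 0"
    unfolding S_def by fact
  obtain G where "G > 0" and G: "\<And>t. norm (g t) \<le> G"
    using periodic_continuous_bounded[OF assms(3,4,1)] by blast
  have "continuous_on UNIV w"
    by (simp add: continuous_at_imp_continuous_on has_vector_derivative_continuous[OF dw])
  then obtain W where "W > 0" and W: "\<And>t. norm (w t) \<le> W"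
    using periodic_continuous_bounded[of w T] per_w assms(1) by blast
  define \<eta> where "\<eta> = S / (2 * (T * G + 1))"
  have "T * G + 1 > 0"
    using assms(1) \<open>G > 0\<close> by (simp add: add_pos_pos)
  then have "\<eta> > 0" and "G * \<eta> * T = S / 2 - \<eta>"
    using \<open>S > 0\<close> unfolding \<eta>_def by (simp_all add: field_simps)
  then have GT\<eta>: "G * \<eta> * T < S / 2"
    by linarith
  obtain \<delta> where "\<delta> > 0"
    and \<delta>: "\<And>t y. t \<in> {0..T} \<Longrightarrow> norm (y - x0) \<le> \<delta> \<Longrightarrow> norm (A (t, y) - A (t, x0)) < \<eta>"
    using uniformly_close_to_slice[OF assms(2) \<open>\<eta> > 0\<close>] by blast
  define \<epsilon> where "\<epsilon> = min (1 / 2) (min (1 / G) (\<delta> / W))"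
  have "\<epsilon> > 0"
    using \<open>G > 0\<close> \<open>W > 0\<close> \<open>\<delta> > 0\<close> by (simp add: \<epsilon>_def)
  have "\<epsilon> \<le> 1 / 2" and "\<epsilon> \<le> 1 / G" and "\<epsilon> \<le> \<delta> / W"
    unfolding \<epsilon>_def by (intro min.coboundedI1 min.coboundedI2 order_refl)+
  then have "\<epsilon> * G \<le> 1" and "\<epsilon> * W \<le> \<delta>"
    using \<open>G > 0\<close> \<open>W > 0\<close> by (simp_all add: pos_le_divide_eq)
  have \<epsilon>g: "\<epsilon> * norm (g t) \<le> 1" for t
    using order_trans[OF mult_left_mono[OF G less_imp_le[OF \<open>\<epsilon> > 0\<close>]] \<open>\<epsilon> * G \<le> 1\<close>] .
  define p where "p t = x0 - \<epsilon> *\<^sub>R w t" for t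
  have "p \<in> class_K T"
    using dw \<epsilon>g per_w \<open>\<epsilon> > 0\<close> unfolding p_def
    by (intro class_KI[where v = "\<lambda>t. - \<epsilon> *\<^sub>R g t"]) (auto intro!: derivative_eq_intros)
  have "\<epsilon> * norm (w t) \<le> \<delta>" for t
    using order_trans[OF mult_left_mono[OF W less_imp_le[OF \<open>\<epsilon> > 0\<close>]] \<open>\<epsilon> * W \<le> \<delta>\<close>] .
  then have "norm ((x0 - \<epsilon> *\<^sub>R w t) - x0) \<le> \<delta>" for t
    using \<open>\<epsilon> > 0\<close> by simp
  then have "norm (A (t, x0 - \<epsilon> *\<^sub>R w t) - A (t, x0)) \<le> \<eta>" if "t \<in> {0..T}" for t
    using \<delta>[OF that] less_imp_le by blast
  from I0_perturbation_le[where T = T, OF assms(2,3) _ _ dw \<epsilon>g G this] assms(1) \<open>\<epsilon> > 0\<close>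
  have "I0 T A p \<le> \<epsilon>\<^sup>2 * S - \<epsilon> * (S - G * \<eta> * T)"
    unfolding p_def S_def aligned by simp
  also have "\<dots> = \<epsilon> * ((\<epsilon> - 1) * S + G * \<eta> * T)"
    by (simp add: power2_eq_square algebra_simps)
  also have "\<dots> < 0"
  proof -
    have "(\<epsilon> - 1) * S \<le> - 1 / 2 * S"
      using mult_right_mono[of "\<epsilon> - 1" "- 1 / 2" S] \<open>\<epsilon> \<le> 1 / 2\<close> \<open>S > 0\<close> by simp
    then show ?thesis
      using GT\<eta> \<open>\<epsilon> > 0\<close> by (intro mult_pos_neg) simp_all
  qed
  finally show ?thesis
    using \<open>p \<in> class_K T\<close> by blast
qed

theorem mainTheorem11:
  fixes T :: real and A :: "real \<times> (real^3) \<Rightarrow> real^3"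
  assumes "T > 0" and "A \<in> class_A T"
  shows "\<exists>p \<in> class_K T. I0 T A p < 0"
proof -
  obtain x0 t1 where "t1 \<in> {0..T}" and "A (t1, x0) \<noteq> A (0, x0)"
    using class_A_nonconstant_slice[OF assms(2,1)] .
  moreover have cont: "continuous_on UNIV A"
    using assms(2) by (rule class_A_continuous)
  then have "continuous_on UNIV (\<lambda>t. A (t, x0))"
    by (intro continuous_on_compose2[OF cont] continuous_intros) auto
  moreover have "A (t + T, x0) = A (t, x0)" for t
    using assms(2) unfolding class_A_def by blast
  ultimately obtain g w where g: "continuous_on UNIV g" "\<And>t. g (t + T) = g t"
    and w: "\<And>t. (w has_vector_derivative g t) (at t)" "\<And>t. w (t + T) = w t"
    and aligned: "integral {0..T} (\<lambda>t. g t \<bullet> A (t, x0)) = integral {0..T} (\<lambda>t. (norm (g t))\<^sup>2)"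
    and pos: "integral {0..T} (\<lambda>t. (norm (g t))\<^sup>2) > 0"
    using periodic_loop_aligned_with_nonconstant[of "\<lambda>t. A (t, x0)" T t1] assms(1) by blast
  from exists_negative_I0_of_aligned_loop[OF assms(1) cont g w aligned pos]
  show ?thesis .
qed

end
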